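(* Let $n\in\mathbf{N}$ and $A\subset[n]$ have property P. For each $a\in A\cap[1,\frac{2n}{3}]$ let $j_a\geqslant0$ be the unique integer with $2^{j_a}a\in\left(\frac n3,\frac{2n}{3}\right]$, and let $B_1=\{2^{j_a}a:a\in A\cap[1,\frac{2n}{3}]\}$. Let $A'''=\{m\in\mathbf{N}:3m\in A_{(\frac12,1]}+A_{(\frac12,1]}\}$. Then $|B_1|=\left|A\cap[1,\frac{2n}{3}]\right|$, $B_1$ and $A'''$ are disjoint subsets of $\left(\frac n3,\frac{2n}{3}\right]$, and consequently $|B_1|+|A'''|\leqslant\left\lceil\frac n3\right\rceil$.
   Context: A set $A\subset\mathbf{N}$ has property P if there are no $x,y,z\in A$ (not necessarily distinct $x,y$) with $z<x$, $z<y$ and $z\mid x+y$. $A_{(\alpha,\beta]}=A\cap(\alpha n,\beta n]$, where intervals denote sets of integers. *)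

theory Defs
  imports Complex_Main
begin

definition propP :: "nat set \<Rightarrow> bool" where
  "propP A \<longleftrightarrow> (\<forall>x\<in>A. \<forall>y\<in>A. \<forall>z\<in>A. z < x \<and> z < y \<longrightarrow> \<not> z dvd (x + y))"

definition Aint :: "nat set \<Rightarrow> nat \<Rightarrow> real \<Rightarrow> real \<Rightarrow> nat set" where
  "Aint A n \<alpha> \<beta> = {x \<in> A. \<alpha> * real n < real x \<and> real x \<le> \<beta> * real n}"

definition midThird :: "nat \<Rightarrow> nat set" where
  "midThird n = {m. real n / 3 < real m \<and> real m \<le> 2 * real n / 3}"

definition lowPart :: "nat set \<Rightarrow> nat \<Rightarrow> nat set" where
  "lowPart A n = {a \<in> A. 1 \<le> a \<and> real a \<le> 2 * real n / 3}"

definition jexp :: "nat \<Rightarrow> nat \<Rightarrow> nat" where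
  "jexp n a = (THE j. 2 ^ j * a \<in> midThird n)"

definition B1 :: "nat set \<Rightarrow> nat \<Rightarrow> nat set" where
  "B1 A n = (\<lambda>a. 2 ^ jexp n a * a) ` lowPart A n"

definition A3 :: "nat set \<Rightarrow> nat \<Rightarrow> nat set" where
  "A3 A n = {m. 1 \<le> m \<and> (\<exists>x\<in>Aint A n (1/2) 1. \<exists>y\<in>Aint A n (1/2) 1. 3 * m = x + y)}"

end

theory Submission
  imports Defs
begin

text \<open>Doubling moves every positive number below 2n/3 into the window (n/3, 2n/3] in exactly one
way, so a \<mapsto> 2^(j_a) a is defined on A \<inter> [1, 2n/3]. It is injective because property P forbids
b dvd a for b < a in A (take x = y = a), and it avoids A''' because an element 2^j a = (x + y)/3 with
x, y > n/2 would give a dvd x + y with a < x, y. Both sets lie in (n/3, 2n/3], which has at most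
\<lceil>n/3\<rceil> integers.\<close>

lemma mem_midThird_iff: "m \<in> midThird n \<longleftrightarrow> n < 3 * m \<and> 3 * m \<le> 2 * n"
proof -
  have "real n / 3 < real m \<longleftrightarrow> real n < real (3 * m)"
    and "real m \<le> 2 * real n / 3 \<longleftrightarrow> real (3 * m) \<le> real (2 * n)"
    by (simp_all add: field_simps)
  then show ?thesis
    unfolding midThird_def by (simp only: mem_Collect_eq of_nat_less_iff of_nat_le_iff)
qed

lemma mem_lowPart_iff: "a \<in> lowPart A n \<longleftrightarrow> a \<in> A \<and> 1 \<le> a \<and> 3 * a \<le> 2 * n"
proof -
  have "real a \<le> 2 * real n / 3 \<longleftrightarrow> real (3 * a) \<le> real (2 * n)"
    by (simp add: field_simps)
  then show ?thesis
    unfolding lowPart_def by (simp only: mem_Collect_eq of_nat_le_iff)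
qed

lemma mem_Aint_upper_half_iff: "x \<in> Aint A n (1/2) 1 \<longleftrightarrow> x \<in> A \<and> n < 2 * x \<and> x \<le> n"
proof -
  have "1/2 * real n < real x \<longleftrightarrow> real n < real (2 * x)"
    by (simp add: field_simps)
  then show ?thesis
    unfolding Aint_def by (simp only: mem_Collect_eq of_nat_less_iff of_nat_le_iff mult_1)
qed

lemma mem_A3_iff:
  "m \<in> A3 A n \<longleftrightarrow> 1 \<le> m \<and> (\<exists>x\<in>A. \<exists>y\<in>A. n < 2 * x \<and> x \<le> n \<and> n < 2 * y \<and> y \<le> n \<and> 3 * m = x + y)"
  unfolding A3_def mem_Collect_eq Bex_def mem_Aint_upper_half_iff by blast

lemma ex_power2_mult_in_window:
  fixes x N :: nat
  assumes "0 < x" "x \<le> 2 * N"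
  shows "\<exists>j. N < 2 ^ j * x \<and> 2 ^ j * x \<le> 2 * N"
  using assms
proof (induction "2 * N - x" arbitrary: x rule: less_induct)
  case less
  show ?case
  proof (cases "N < x")
    case True
    with less.prems show ?thesis by (intro exI[of _ 0]) simp
  next
    case False
    with less.prems have "2 * x \<le> 2 * N" and "2 * N - 2 * x < 2 * N - x" by simp_all
    with less.hyps[of "2 * x"] less.prems obtain j where "N < 2 ^ j * (2 * x) \<and> 2 ^ j * (2 * x) \<le> 2 * N"
      by auto
    then show ?thesis by (intro exI[of _ "Suc j"]) (simp add: mult.assoc mult.left_commute)
  qed
qed

lemma power2_mult_in_window_unique:
  fixes x N :: nat
  assumes "N < 2 ^ j * x" "2 ^ j * x \<le> 2 * N" "N < 2 ^ k * x" "2 ^ k * x \<le> 2 * N"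
  shows "j = k"
proof -
  have False if "i < l" "N < 2 ^ i * x" "2 ^ l * x \<le> 2 * N" for i l
  proof -
    have "2 * 2 ^ i \<le> (2::nat) ^ l"
      using power_increasing[of "Suc i" l "2::nat"] \<open>i < l\<close> by simp
    then have "2 * (2 ^ i * x) \<le> 2 ^ l * x"
      using mult_right_mono[of _ _ x] by (simp add: mult.assoc)
    with that show False by linarith
  qed
  with assms show ?thesis by (metis linorder_neqE_nat)
qed

lemma ex1_power2_mult_mem_midThird:
  assumes "a \<in> lowPart A n"
  shows "\<exists>!j. 2 ^ j * a \<in> midThird n"
proof -
  have window_iff: "2 ^ j * a \<in> midThird n \<longleftrightarrow> n < 2 ^ j * (3 * a) \<and> 2 ^ j * (3 * a) \<le> 2 * n" for j
    by (simp add: mem_midThird_iff mult.left_commute)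
  from assms have "0 < 3 * a" "3 * a \<le> 2 * n"
    by (auto simp: mem_lowPart_iff)
  then obtain j where "2 ^ j * a \<in> midThird n"
    using ex_power2_mult_in_window window_iff by blast
  then show ?thesis
    using power2_mult_in_window_unique window_iff by blast
qed

lemma power_jexp_mult_mem_midThird:
  assumes "a \<in> lowPart A n"
  shows "2 ^ jexp n a * a \<in> midThird n"
  unfolding jexp_def using theI'[OF ex1_power2_mult_mem_midThird[OF assms]] .

lemma propP_not_dvd_sum:
  assumes "propP A" "x \<in> A" "y \<in> A" "z \<in> A" "z < x" "z < y"
  shows "\<not> z dvd x + y"
  using assms unfolding propP_def by blast

lemma propP_not_dvd:
  assumes "propP A" "a \<in> A" "b \<in> A" "b < a"
  shows "\<not> b dvd a"
  using propP_not_dvd_sum[OF assms(1,2,2,3,4,4)] by auto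

lemma propP_power2_mult_cancel:
  assumes P: "propP A" and "a \<in> A" "b \<in> A" "0 < b" and ij: "i \<le> j"
    and eq: "2 ^ i * a = 2 ^ j * (b::nat)"
  shows "a = b"
proof -
  have "2 ^ i * a = 2 ^ i * (2 ^ (j - i) * b)"
    using eq ij by (simp add: power_add[symmetric])
  then have a: "a = 2 ^ (j - i) * b" by simp
  with propP_not_dvd[OF P \<open>a \<in> A\<close> \<open>b \<in> A\<close>] have "a \<le> b" by fastforce
  with a \<open>0 < b\<close> show ?thesis
    by (metis le_antisym mult_le_mono1 mult_1 one_le_power one_le_numeral)
qed

lemma inj_on_B1_map:
  assumes "propP A"
  shows "inj_on (\<lambda>a. 2 ^ jexp n a * a) (lowPart A n)"
proof (rule inj_onI)
  fix a b
  assume "a \<in> lowPart A n" "b \<in> lowPart A n" and eq: "2 ^ jexp n a * a = 2 ^ jexp n b * b"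
  then have "a \<in> A" "b \<in> A" "0 < a" "0 < b" by (auto simp: mem_lowPart_iff)
  then show "a = b"
    using propP_power2_mult_cancel[OF assms] eq
    by (metis nle_le)
qed

lemma card_B1:
  assumes "propP A"
  shows "card (B1 A n) = card (lowPart A n)"
  unfolding B1_def using card_image[OF inj_on_B1_map[OF assms]] .

lemma B1_subset_midThird: "B1 A n \<subseteq> midThird n"
  unfolding B1_def using power_jexp_mult_mem_midThird by blast

lemma A3_subset_midThird: "A3 A n \<subseteq> midThird n"
  by (auto simp: mem_A3_iff mem_midThird_iff)

lemma B1_A3_disjoint:
  assumes P: "propP A"
  shows "B1 A n \<inter> A3 A n = {}"
proof (rule ccontr)
  assume "B1 A n \<inter> A3 A n \<noteq> {}"
  then obtain a where a: "a \<in> lowPart A n" and "2 ^ jexp n a * a \<in> A3 A n"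
    unfolding B1_def by blast
  then obtain x y where "x \<in> A" "y \<in> A" "n < 2 * x" "x \<le> n" "n < 2 * y" "y \<le> n"
    and sum: "3 * (2 ^ jexp n a * a) = x + y"
    by (auto simp: mem_A3_iff)
  have "a \<le> 2 ^ jexp n a * a" by simp
  \<comment> \<open>x + y < 3 min(x, y) because max(x, y) \<le> n < 2 min(x, y)\<close>
  with sum \<open>n < 2 * x\<close> \<open>x \<le> n\<close> \<open>n < 2 * y\<close> \<open>y \<le> n\<close> have "a < x" "a < y" by linarith+
  moreover have "a dvd x + y" by (metis sum dvd_triv_right dvd_mult)
  moreover have "a \<in> A" using a by (simp add: mem_lowPart_iff)
  ultimately show False
    using propP_not_dvd_sum[OF P \<open>x \<in> A\<close> \<open>y \<in> A\<close>] by blast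
qed

lemma midThird_eq: "midThird n = {n div 3 <.. 2 * n div 3}"
  by (auto simp: mem_midThird_iff)

lemma nat_ceiling_third: "nat \<lceil>real n / 3\<rceil> = (n + 2) div 3"
proof -
  have "\<lceil>real n / 3\<rceil> = \<lceil>real_of_int (int n) / of_int 3\<rceil>" by simp
  also have "\<dots> = - (- int n div 3)" by (rule ceiling_divide_eq_div)
  also have "\<dots> = int ((n + 2) div 3)" by linarith
  finally show ?thesis by simp
qed

lemma card_midThird_le: "card (midThird n) \<le> nat \<lceil>real n / 3\<rceil>"
  unfolding midThird_eq nat_ceiling_third by simp

theorem mainTheorem11:
  fixes n :: nat and A :: "nat set"
  assumes "A \<subseteq> {1..n}" and "propP A"
  shows "(\<forall>a\<in>lowPart A n. \<exists>!j::nat. 2 ^ j * a \<in> midThird n)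
    \<and> card (B1 A n) = card (lowPart A n)
    \<and> B1 A n \<subseteq> midThird n \<and> A3 A n \<subseteq> midThird n
    \<and> B1 A n \<inter> A3 A n = {}
    \<and> card (B1 A n) + card (A3 A n) \<le> nat \<lceil>real n / 3\<rceil>"
proof -
  have "finite (midThird n)" by (simp add: midThird_eq)
  then have "finite (B1 A n)" "finite (A3 A n)"
    using B1_subset_midThird A3_subset_midThird by (metis finite_subset)+
  then have "card (B1 A n) + card (A3 A n) = card (B1 A n \<union> A3 A n)"
    using B1_A3_disjoint[OF assms(2)] by (simp add: card_Un_disjoint)
  also have "\<dots> \<le> card (midThird n)"
    using \<open>finite (midThird n)\<close> B1_subset_midThird A3_subset_midThird by (intro card_mono) auto
  also have "\<dots> \<le> nat \<lceil>real n / 3\<rceil>" by (rule card_midThird_le)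
  finally show ?thesis
    using ex1_power2_mult_mem_midThird card_B1[OF assms(2)] B1_subset_midThird
      A3_subset_midThird B1_A3_disjoint[OF assms(2)] by blast
qed

end
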